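(* Let $T$ be an admissible LCA-tree with $n$ leaves and let $z$ be a positive integer. Define sets of leaves $\mathbf{C}_0=\emptyset$ and, for $i=1,\dots,n$, $\mathbf{C}_i=\mathbf{C}_{i-1}\cup\{c_i\}$, where $c_i$ is any leaf not in $\mathbf{C}_{i-1}$ that maximizes the cost-decrease $\mathrm{Cost}_z(T,\mathbf{C}_{i-1})-\mathrm{Cost}_z(T,\mathbf{C}_{i-1}\cup\{c_i\})$ (equivalently, minimizes $\mathrm{Cost}_z(T,\mathbf{C}_{i-1}\cup\{c_i\})$; with the convention $\mathrm{Cost}_z(T,\emptyset)=+\infty$). Then for every $k\in\{1,\dots,n\}$, $\mathbf{C}_k$ minimizes $\mathrm{Cost}_z(T,\mathbf{C})$ over all sets $\mathbf{C}$ of $k$ distinct leaves of $T$.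
   Context: An LCA-tree is a finite rooted tree $T$ in which every node $\eta$ (leaves included) carries a real value $d(\eta)$; for leaves $\ell_i,\ell_j$, $d(\ell_i,\ell_j)=d(\ell_i\lor\ell_j)$, where $\ell_i\lor\ell_j$ is their lowest common ancestor ($\ell\lor\ell=\ell$). It is admissible if $d(\eta)\ge0$ for all nodes and $d(\eta)\le d(\mathrm{parent}(\eta))$ for every non-root node. For a set $\mathbf{C}$ of leaves, $\mathrm{Cost}_z(T,\mathbf{C})=\sum_{\ell\text{ leaf of }T}\min_{c\in\mathbf{C}} d(\ell,c)^z$. *)

theory Defs
  imports Complex_Main
begin

text \<open>An LCA-tree: a finite rooted (ordered) tree whose every node carries a real value.
  Nodes are identified by their positions (paths of child indices from the root).\<close>
datatype ltree = Nd real "ltree list"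

fun val :: "ltree \<Rightarrow> real" where
  "val (Nd v _) = v"

fun subtree_at :: "ltree \<Rightarrow> nat list \<Rightarrow> ltree option" where
  "subtree_at t [] = Some t"
| "subtree_at (Nd v cs) (i # p) = (if i < length cs then subtree_at (cs ! i) p else None)"

definition leaves :: "ltree \<Rightarrow> nat list set" where
  "leaves t = {p. \<exists>v. subtree_at t p = Some (Nd v [])}"

definition dval :: "ltree \<Rightarrow> nat list \<Rightarrow> real" where
  "dval t p = (case subtree_at t p of Some s \<Rightarrow> val s | None \<Rightarrow> 0)"

text \<open>Lowest common ancestor of two positions = longest common prefix.\<close>
fun lcp :: "nat list \<Rightarrow> nat list \<Rightarrow> nat list" where
  "lcp (x # xs) (y # ys) = (if x = y then x # lcp xs ys else [])"
| "lcp _ _ = []"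

definition dist_lca :: "ltree \<Rightarrow> nat list \<Rightarrow> nat list \<Rightarrow> real" where
  "dist_lca t l1 l2 = dval t (lcp l1 l2)"

fun admissible :: "ltree \<Rightarrow> bool" where
  "admissible (Nd v cs) = (0 \<le> v \<and> (\<forall>c\<in>set cs. val c \<le> v \<and> admissible c))"

text \<open>Cost_z(T,C) for a nonempty set C of leaves.\<close>
definition cost :: "nat \<Rightarrow> ltree \<Rightarrow> nat list set \<Rightarrow> real" where
  "cost z t C = (\<Sum>l\<in>leaves t. Min ((\<lambda>c. dist_lca t l c ^ z) ` C))"

end

(* Write W u = d(u)^z.  For a leaf l and centres C, the nearest centre is reached through the
   deepest ancestor p of l lying on a root path of some centre, so min_c W(lca(l, c)) = W p, which
   telescopes along the root path of p.  Summing over the leaves gives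
   Cost_z(T, C) = n W(root) - F C, where F C adds up the weights
   (W(parent u) - W u) * #(leaves below u) >= 0 over all ancestors u of the centres.
   Such a "tree coverage" function is maximised over k-sets of leaves by the greedy choice:
   any k-set containing the first j greedy centres can be changed, without decreasing F, into
   one containing the first j + 1, by exchanging the centre through which the root path of the
   next greedy centre leaves the ancestors of the set. *)

theory Submission
  imports Defs "HOL-Library.Sublist"
begin

section \<open>Coverage functions of prefix-closed sets\<close>

definition prefix_closure :: "'a list set \<Rightarrow> 'a list set" where
  "prefix_closure S = {u. \<exists>c\<in>S. prefix u c}"

definition coverage :: "('a list \<Rightarrow> real) \<Rightarrow> 'a list set \<Rightarrow> real" where
  "coverage v S = sum v (prefix_closure S)"

definition gain :: "('a list \<Rightarrow> real) \<Rightarrow> 'a list \<Rightarrow> 'a list set \<Rightarrow> real" where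
  "gain v x S = sum v (set (prefixes x) - prefix_closure S)"

lemma prefix_closure_UN: "prefix_closure S = (\<Union>c\<in>S. set (prefixes c))"
  by (auto simp: prefix_closure_def)

lemma finite_prefix_closure [simp]: "finite S \<Longrightarrow> finite (prefix_closure S)"
  by (simp add: prefix_closure_UN)

lemma prefix_closure_insert: "prefix_closure (insert x S) = set (prefixes x) \<union> prefix_closure S"
  by (auto simp: prefix_closure_def)

lemma prefix_closure_mono: "S \<subseteq> T \<Longrightarrow> prefix_closure S \<subseteq> prefix_closure T"
  by (auto simp: prefix_closure_def)

lemma prefix_closure_downward: "u \<in> prefix_closure S \<Longrightarrow> prefix w u \<Longrightarrow> w \<in> prefix_closure S"
  by (auto simp: prefix_closure_def intro: prefix_order.trans)

lemma coverage_insert: "finite S \<Longrightarrow> coverage v (insert x S) = coverage v S + gain v x S"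
proof -
  assume "finite S"
  then have "sum v (prefix_closure S \<union> (set (prefixes x) - prefix_closure S))
      = sum v (prefix_closure S) + sum v (set (prefixes x) - prefix_closure S)"
    by (intro sum.union_disjoint) auto
  then show ?thesis
    by (simp add: coverage_def gain_def prefix_closure_insert Un_commute)
qed

lemma gain_antimono:
  assumes "\<forall>u. 0 \<le> v u" "S \<subseteq> T"
  shows "gain v x T \<le> gain v x S"
  unfolding gain_def using assms prefix_closure_mono[OF assms(2)] by (intro sum_mono2) auto

lemma gain_split:
  assumes "A \<subseteq> set (prefixes x)"
  shows "gain v x S = sum v (A - prefix_closure S) + sum v (set (prefixes x) - prefix_closure S - A)"
proof -
  have "sum v (set (prefixes x) - prefix_closure S)
      = sum v (set (prefixes x) - prefix_closure S - (A - prefix_closure S))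
        + sum v (A - prefix_closure S)"
    using assms by (intro sum.subset_diff) auto
  moreover have "set (prefixes x) - prefix_closure S - (A - prefix_closure S)
      = set (prefixes x) - prefix_closure S - A" by auto
  ultimately show ?thesis unfolding gain_def by simp
qed

lemma prefixes_Int_prefix_closure:
  assumes "S \<noteq> {}"
  obtains u where "prefix u g" "set (prefixes g) \<inter> prefix_closure S = set (prefixes u)"
proof -
  define D where "D = set (prefixes g) \<inter> prefix_closure S"
  have "[] \<in> D" using assms by (auto simp: D_def prefix_closure_def)
  moreover have "finite D" by (simp add: D_def)
  ultimately have "Max (length ` D) \<in> length ` D" by (intro Max_in) auto
  then obtain u where u: "u \<in> D" "length u = Max (length ` D)" by auto
  have "prefix w u" if "w \<in> D" for w
  proof -
    have "length w \<le> length u" using that u(2) \<open>finite D\<close> by simp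
    with that u(1) show ?thesis by (auto simp: D_def intro: prefix_length_prefix)
  qed
  moreover have "w \<in> D" if "prefix w u" for w
    using that u(1) by (auto simp: D_def intro: prefix_closure_downward prefix_order.trans)
  ultimately have "D = set (prefixes u)" by auto
  moreover have "prefix u g" using u(1) by (simp add: D_def)
  ultimately show thesis using that by (simp add: D_def)
qed

lemma gain_exchange:
  assumes nonneg: "\<forall>u. 0 \<le> v u" and "G \<subseteq> Ob" and "Ob - G \<noteq> {}"
    and greedy: "\<forall>x\<in>Ob - G. gain v x G \<le> gain v g G"
  shows "\<exists>y\<in>Ob - G. gain v y (Ob - {y}) \<le> gain v g (Ob - {y})"
proof -
  obtain u where "prefix u g" and u: "set (prefixes g) \<inter> prefix_closure Ob = set (prefixes u)"
    using prefixes_Int_prefix_closure \<open>Ob - G \<noteq> {}\<close> by blast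
  have g_covered: "set (prefixes g) \<inter> prefix_closure S \<subseteq> set (prefixes u)" if "S \<subseteq> Ob" for S
    using u prefix_closure_mono[OF that] by blast
  show ?thesis
  proof (cases "u \<in> prefix_closure G")
    case True
    then obtain y where y: "y \<in> Ob - G" using \<open>Ob - G \<noteq> {}\<close> by blast
    have "G \<subseteq> Ob - {y}" using y \<open>G \<subseteq> Ob\<close> by blast
    have "set (prefixes u) \<subseteq> prefix_closure G"
      using True by (auto intro: prefix_closure_downward)
    then have "set (prefixes g) - prefix_closure G \<subseteq> set (prefixes g) - prefix_closure (Ob - {y})"
      using g_covered[of "Ob - {y}"] by blast
    then have "gain v g G \<le> gain v g (Ob - {y})"
      unfolding gain_def using nonneg by (intro sum_mono2) auto
    moreover have "gain v y (Ob - {y}) \<le> gain v y G"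
      using gain_antimono[OF nonneg \<open>G \<subseteq> Ob - {y}\<close>] .
    moreover have "gain v y G \<le> gain v g G" using y greedy by blast
    ultimately show ?thesis using y by (meson order_trans)
  next
    case False
    \<comment> \<open>Exchange an element y of Ob extending u, the deepest prefix of g covered by Ob:
      y and g gain the same on set (prefixes u), and beyond u the gain of g does not shrink.\<close>
    have "u \<in> set (prefixes g) \<inter> prefix_closure Ob" unfolding u by simp
    then obtain y where "y \<in> Ob" "prefix u y" by (auto simp: prefix_closure_def)
    have y: "y \<in> Ob - G" using False \<open>y \<in> Ob\<close> \<open>prefix u y\<close> by (auto simp: prefix_closure_def)
    define Q where "Q = Ob - {y}"
    define A where "A = set (prefixes u)"
    have "G \<subseteq> Q" "Q \<subseteq> Ob" using y \<open>G \<subseteq> Ob\<close> by (auto simp: Q_def)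
    have Ay: "A \<subseteq> set (prefixes y)" and Ag: "A \<subseteq> set (prefixes g)"
      using prefix_order.trans[OF _ \<open>prefix u y\<close>] prefix_order.trans[OF _ \<open>prefix u g\<close>]
      by (auto simp: A_def)
    have g_rest: "set (prefixes g) - prefix_closure S - A = set (prefixes g) - A" if "S \<subseteq> Ob" for S
      using g_covered[OF that] by (auto simp: A_def)
    have "sum v (set (prefixes y) - prefix_closure Q - A) \<le> sum v (set (prefixes y) - prefix_closure G - A)"
      using nonneg prefix_closure_mono[OF \<open>G \<subseteq> Q\<close>] by (intro sum_mono2) auto
    also have "\<dots> \<le> sum v (set (prefixes g) - A)"
    proof -
      have "gain v y G \<le> gain v g G" using greedy y by blast
      moreover have "gain v g G = sum v (A - prefix_closure G) + sum v (set (prefixes g) - A)"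
        using gain_split[OF Ag, of v G] g_rest[OF \<open>G \<subseteq> Ob\<close>] by simp
      ultimately show ?thesis using gain_split[OF Ay, of v G] by linarith
    qed
    finally have "gain v y Q \<le> gain v g Q"
      using gain_split[OF Ay, of v Q] gain_split[OF Ag, of v Q] g_rest[OF \<open>Q \<subseteq> Ob\<close>] by simp
    then show ?thesis using y by (auto simp: Q_def)
  qed
qed

lemma coverage_greedy_exchange:
  assumes nonneg: "\<forall>u. 0 \<le> v u" and "finite Ob" "G \<subseteq> Ob" "card G < card Ob" "Ob \<subseteq> L"
    and g: "g \<in> L - G"
    and greedy: "\<forall>x\<in>L - G. coverage v (insert x G) \<le> coverage v (insert g G)"
  shows "\<exists>Ob'. insert g G \<subseteq> Ob' \<and> Ob' \<subseteq> L \<and> card Ob' = card Ob \<and> coverage v Ob \<le> coverage v Ob'"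
proof (cases "g \<in> Ob")
  case True
  then show ?thesis using assms by (intro exI[of _ Ob]) auto
next
  case False
  have "finite G" using \<open>finite Ob\<close> \<open>G \<subseteq> Ob\<close> finite_subset by blast
  have "Ob - G \<noteq> {}"
    using \<open>card G < card Ob\<close> card_mono[OF \<open>finite G\<close>, of Ob] by auto
  moreover have "\<forall>x\<in>Ob - G. gain v x G \<le> gain v g G"
  proof
    fix x assume "x \<in> Ob - G"
    then have "coverage v (insert x G) \<le> coverage v (insert g G)"
      using greedy \<open>Ob \<subseteq> L\<close> by blast
    then show "gain v x G \<le> gain v g G" by (simp add: coverage_insert[OF \<open>finite G\<close>])
  qed
  ultimately obtain y where y: "y \<in> Ob - G" "gain v y (Ob - {y}) \<le> gain v g (Ob - {y})"
    using gain_exchange[OF nonneg \<open>G \<subseteq> Ob\<close>] by blast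
  have fin: "finite (Ob - {y})" using \<open>finite Ob\<close> by simp
  have "coverage v Ob = coverage v (Ob - {y}) + gain v y (Ob - {y})"
    using coverage_insert[OF fin, of v y] y(1) by (simp add: insert_absorb)
  also have "\<dots> \<le> coverage v (insert g (Ob - {y}))"
    using coverage_insert[OF fin, of v g] y(2) by simp
  finally have "coverage v Ob \<le> coverage v (insert g (Ob - {y}))" .
  moreover have "card (insert g (Ob - {y})) = card Ob"
    using False y(1) \<open>finite Ob\<close> card_Suc_Diff1[of Ob y] by simp
  moreover have "insert g G \<subseteq> insert g (Ob - {y})" "insert g (Ob - {y}) \<subseteq> L"
    using y(1) g \<open>G \<subseteq> Ob\<close> \<open>Ob \<subseteq> L\<close> by auto
  ultimately show ?thesis by blast
qed

lemma card_image_fresh: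
  assumes "\<forall>i\<in>{1..n}. c i \<notin> c ` {1..<i}" and "j \<le> n"
  shows "card (c ` {1..j}) = j"
  using assms(2)
proof (induction j)
  case (Suc j)
  have "Suc j \<in> {1..n}" using Suc.prems by simp
  then have "c (Suc j) \<notin> c ` {1..j}"
    using assms(1) atLeastLessThanSuc_atLeastAtMost by metis
  then show ?case using Suc by (simp add: atLeastAtMostSuc_conv)
qed simp

lemma coverage_greedy_optimal:
  assumes nonneg: "\<forall>u. 0 \<le> v u" and "finite L"
    and greedy: "\<forall>i\<in>{1..n}. c i \<in> L \<and> c i \<notin> c ` {1..<i} \<and>
        (\<forall>x\<in>L - c ` {1..<i}. coverage v (insert x (c ` {1..<i})) \<le> coverage v (insert (c i) (c ` {1..<i})))"
    and "k \<le> n" "C \<subseteq> L" "card C = k"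
  shows "coverage v C \<le> coverage v (c ` {1..k})"
proof -
  have "\<forall>i\<in>{1..n}. c i \<notin> c ` {1..<i}" using greedy by blast
  then have card_c: "card (c ` {1..j}) = j" if "j \<le> n" for j
    using card_image_fresh that by blast
  have extend: "\<exists>C'. c ` {1..j} \<subseteq> C' \<and> C' \<subseteq> L \<and> card C' = k \<and> coverage v C \<le> coverage v C'"
    if "j \<le> k" for j
    using that
  proof (induction j)
    case 0
    show ?case using \<open>C \<subseteq> L\<close> \<open>card C = k\<close> by (intro exI[of _ C]) simp
  next
    case (Suc j)
    from Suc.IH[OF Suc_leD[OF Suc.prems]] obtain C'
      where C': "c ` {1..j} \<subseteq> C'" "C' \<subseteq> L" "card C' = k" "coverage v C \<le> coverage v C'"
      by blast
    have "Suc j \<in> {1..n}" using Suc.prems \<open>k \<le> n\<close> by simp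
    from bspec[OF greedy this]
    have fresh: "c (Suc j) \<in> L - c ` {1..j}"
      and best: "\<forall>x\<in>L - c ` {1..j}. coverage v (insert x (c ` {1..j}))
                  \<le> coverage v (insert (c (Suc j)) (c ` {1..j}))"
      unfolding atLeastLessThanSuc_atLeastAtMost by auto
    have "card (c ` {1..j}) < card C'"
      using card_c Suc.prems \<open>k \<le> n\<close> C'(3) by simp
    moreover have "finite C'" using C'(2) \<open>finite L\<close> finite_subset by blast
    ultimately obtain C'' where C'': "insert (c (Suc j)) (c ` {1..j}) \<subseteq> C''" "C'' \<subseteq> L"
        "card C'' = card C'" "coverage v C' \<le> coverage v C''"
      using coverage_greedy_exchange[OF nonneg _ C'(1) _ C'(2) fresh best] by blast
    have "c ` {1..Suc j} \<subseteq> C''" using C''(1) by (simp add: atLeastAtMostSuc_conv)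
    then show ?case using C'' C'(3,4) by (intro exI[of _ C'']) simp
  qed
  from extend[OF order_refl] obtain C'
    where C': "c ` {1..k} \<subseteq> C'" "C' \<subseteq> L" "card C' = k" "coverage v C \<le> coverage v C'"
    by blast
  have "finite C'" using C'(2) \<open>finite L\<close> finite_subset by blast
  then have "c ` {1..k} = C'"
    using card_subset_eq[OF _ C'(1)] C'(3) card_c[OF \<open>k \<le> n\<close>] by simp
  then show ?thesis using C'(4) by simp
qed

section \<open>LCA-trees\<close>

lemma subtree_at_append:
  "subtree_at t (p @ r) = Option.bind (subtree_at t p) (\<lambda>s. subtree_at s r)"
proof (induction p arbitrary: t)
  case (Cons i p)
  then show ?case by (cases t) auto
qed simp

lemma subtree_at_prefix:
  assumes "subtree_at t q \<noteq> None" and "prefix p q"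
  shows "subtree_at t p \<noteq> None"
  using assms by (cases "subtree_at t p") (auto simp: prefix_def subtree_at_append)

lemma admissible_subtree_at:
  "admissible t \<Longrightarrow> subtree_at t r = Some s \<Longrightarrow> admissible s \<and> val s \<le> val t"
proof (induction r arbitrary: t)
  case (Cons i r)
  obtain v cs where t: "t = Nd v cs" by (cases t)
  have i: "i < length cs" and s: "subtree_at (cs ! i) r = Some s"
    using Cons.prems unfolding t by (auto split: if_splits)
  then have "admissible (cs ! i)" "val (cs ! i) \<le> v"
    using Cons.prems(1) nth_mem[OF i] unfolding t by auto
  then show ?case using Cons.IH[OF _ s] unfolding t by fastforce
qed simp

lemma dval_nonneg: "admissible t \<Longrightarrow> 0 \<le> dval t p"
proof (cases "subtree_at t p")
  case (Some s)
  moreover assume "admissible t"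
  ultimately have "admissible s" using admissible_subtree_at by blast
  then show ?thesis using Some by (cases s) (simp add: dval_def)
qed (simp add: dval_def)

lemma dval_antimono:
  assumes "admissible t" "subtree_at t q \<noteq> None" "prefix p q"
  shows "dval t q \<le> dval t p"
proof -
  obtain r where "q = p @ r" using \<open>prefix p q\<close> by (auto elim: prefixE)
  then obtain sp sq where "subtree_at t p = Some sp" "subtree_at sp r = Some sq" "subtree_at t q = Some sq"
    using assms(2) by (cases "subtree_at t p") (auto simp: subtree_at_append)
  moreover have "admissible sp" using admissible_subtree_at[OF assms(1)] calculation(1) by blast
  ultimately show ?thesis using admissible_subtree_at by (simp add: dval_def)
qed

lemma subtree_at_prefix_leaf: "l \<in> leaves t \<Longrightarrow> prefix q l \<Longrightarrow> subtree_at t q \<noteq> None"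
  by (rule subtree_at_prefix) (auto simp: leaves_def)

lemma finite_nodes: "finite {p. subtree_at t p \<noteq> None}"
proof (induction t)
  case (Nd v cs)
  have "{p. subtree_at (Nd v cs) p \<noteq> None}
      \<subseteq> insert [] (\<Union>i<length cs. Cons i ` {p. subtree_at (cs ! i) p \<noteq> None})"
  proof
    fix p assume "p \<in> {p. subtree_at (Nd v cs) p \<noteq> None}"
    then show "p \<in> insert [] (\<Union>i<length cs. Cons i ` {p. subtree_at (cs ! i) p \<noteq> None})"
      by (cases p) (auto split: if_splits)
  qed
  moreover have "finite (insert [] (\<Union>i<length cs. Cons i ` {p. subtree_at (cs ! i) p \<noteq> None}))"
    using Nd.IH by auto
  ultimately show ?case using finite_subset by blast
qed

lemma finite_leaves: "finite (leaves t)"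
  by (rule finite_subset[OF _ finite_nodes]) (auto simp: leaves_def)

lemma prefix_lcp_iff: "prefix u (lcp a b) \<longleftrightarrow> prefix u a \<and> prefix u b"
proof (induction a b arbitrary: u rule: lcp.induct)
  case (1 x xs y ys)
  then show ?case by (cases u) auto
qed auto

lemma sum_prefixes_telescope:
  fixes W :: "'a list \<Rightarrow> 'b::ab_group_add"
  shows "(\<Sum>u\<in>set (prefixes p). W (butlast u) - W u) = W [] - W p"
proof (induction p rule: rev_induct)
  case (snoc x xs)
  have "xs @ [x] \<notin> set (prefixes xs)" using prefix_length_le by fastforce
  then show ?case using snoc.IH by simp
qed simp

lemma Min_dist_lca_power:
  assumes adm: "admissible t" and l: "l \<in> leaves t" and "finite C" "C \<noteq> {}"
  shows "Min ((\<lambda>c. dist_lca t l c ^ z) ` C)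
       = dval t [] ^ z - (\<Sum>u\<in>set (prefixes l) \<inter> prefix_closure C. dval t (butlast u) ^ z - dval t u ^ z)"
proof -
  obtain p where "prefix p l" and p: "set (prefixes l) \<inter> prefix_closure C = set (prefixes p)"
    using prefixes_Int_prefix_closure \<open>C \<noteq> {}\<close> by blast
  have "p \<in> set (prefixes l) \<inter> prefix_closure C" unfolding p by simp
  then obtain c where "c \<in> C" "prefix p c" by (auto simp: prefix_closure_def)
  have lcp_below: "prefix (lcp l c') p" if "c' \<in> C" for c'
  proof -
    have "lcp l c' \<in> set (prefixes l) \<inter> prefix_closure C"
      using that prefix_lcp_iff[of "lcp l c'" l c'] by (auto simp: prefix_closure_def)
    then show ?thesis unfolding p by simp
  qed
  have "lcp l c = p"
    using lcp_below[OF \<open>c \<in> C\<close>] \<open>prefix p l\<close> \<open>prefix p c\<close> prefix_lcp_iff prefix_order.antisym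
    by blast
  have "Min ((\<lambda>c. dist_lca t l c ^ z) ` C) = dval t p ^ z"
  proof (rule Min_eqI)
    show "finite ((\<lambda>c. dist_lca t l c ^ z) ` C)" using \<open>finite C\<close> by simp
  next
    fix y assume "y \<in> (\<lambda>c. dist_lca t l c ^ z) ` C"
    then obtain c' where "c' \<in> C" "y = dval t (lcp l c') ^ z" by (auto simp: dist_lca_def)
    then show "dval t p ^ z \<le> y"
      using dval_antimono[OF adm subtree_at_prefix_leaf[OF l \<open>prefix p l\<close>] lcp_below[OF \<open>c' \<in> C\<close>]]
        dval_nonneg[OF adm] by (simp add: power_mono)
  next
    show "dval t p ^ z \<in> (\<lambda>c. dist_lca t l c ^ z) ` C"
      using \<open>c \<in> C\<close> \<open>lcp l c = p\<close> by (auto simp: dist_lca_def)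
  qed
  then show ?thesis unfolding p sum_prefixes_telescope[of "\<lambda>u. dval t u ^ z"] by simp
qed

definition lca_weight :: "nat \<Rightarrow> ltree \<Rightarrow> nat list \<Rightarrow> real" where
  "lca_weight z t u = (dval t (butlast u) ^ z - dval t u ^ z) * real (card {l \<in> leaves t. prefix u l})"

lemma lca_weight_nonneg:
  assumes adm: "admissible t"
  shows "0 \<le> lca_weight z t u"
proof (cases "\<exists>l\<in>leaves t. prefix u l")
  case True
  then obtain l where "l \<in> leaves t" "prefix u l" by blast
  then have "dval t u ^ z \<le> dval t (butlast u) ^ z"
    using dval_antimono[OF adm subtree_at_prefix_leaf prefixeq_butlast] dval_nonneg[OF adm]
    by (simp add: power_mono)
  then show ?thesis by (simp add: lca_weight_def)
next
  case False
  then have no_leaves: "{l \<in> leaves t. prefix u l} = {}" by blast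
  show ?thesis unfolding lca_weight_def no_leaves by simp
qed

lemma cost_eq_coverage:
  assumes "admissible t" "finite C" "C \<noteq> {}"
  shows "cost z t C = real (card (leaves t)) * dval t [] ^ z - coverage (lca_weight z t) C"
proof -
  define g where "g u = dval t (butlast u) ^ z - dval t u ^ z" for u
  have "cost z t C = (\<Sum>l\<in>leaves t. dval t [] ^ z - (\<Sum>u\<in>{u \<in> prefix_closure C. prefix u l}. g u))"
    unfolding cost_def g_def using assms
    by (intro sum.cong) (simp_all add: Min_dist_lca_power Int_def conj_commute)
  also have "\<dots> = real (card (leaves t)) * dval t [] ^ z
      - (\<Sum>l\<in>leaves t. \<Sum>u\<in>{u \<in> prefix_closure C. prefix u l}. g u)"
    by (simp add: sum_subtractf)
  also have "(\<Sum>l\<in>leaves t. \<Sum>u\<in>{u \<in> prefix_closure C. prefix u l}. g u)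
      = (\<Sum>u\<in>prefix_closure C. \<Sum>l\<in>{l \<in> leaves t. prefix u l}. g u)"
    by (rule sum.swap_restrict) (simp_all add: finite_leaves \<open>finite C\<close>)
  also have "\<dots> = coverage (lca_weight z t) C"
    by (simp add: coverage_def lca_weight_def g_def mult.commute)
  finally show ?thesis .
qed

theorem mainTheorem6:
  fixes t :: ltree and z :: nat and c :: "nat \<Rightarrow> nat list"
  assumes adm: "admissible t"
    and zpos: "0 < z"
    and greedy: "\<forall>i\<in>{1..card (leaves t)}.
        c i \<in> leaves t \<and> c i \<notin> c ` {1..<i} \<and>
        (\<forall>x\<in>leaves t - c ` {1..<i}.
           cost z t (insert (c i) (c ` {1..<i})) \<le> cost z t (insert x (c ` {1..<i})))"
  shows "\<forall>k\<in>{1..card (leaves t)}.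
           c ` {1..k} \<subseteq> leaves t \<and> card (c ` {1..k}) = k \<and>
           (\<forall>C. C \<subseteq> leaves t \<and> card C = k \<longrightarrow> cost z t (c ` {1..k}) \<le> cost z t C)"
proof (intro ballI conjI allI impI)
  define K where "K = real (card (leaves t)) * dval t [] ^ z"
  have cost: "cost z t C = K - coverage (lca_weight z t) C" if "finite C" "C \<noteq> {}" for C
    using cost_eq_coverage[OF adm that] by (simp add: K_def)
  have "\<forall>i\<in>{1..card (leaves t)}. c i \<in> leaves t \<and> c i \<notin> c ` {1..<i} \<and>
      (\<forall>x\<in>leaves t - c ` {1..<i}. coverage (lca_weight z t) (insert x (c ` {1..<i}))
         \<le> coverage (lca_weight z t) (insert (c i) (c ` {1..<i})))"
    using greedy by (simp add: cost)
  note optimal = coverage_greedy_optimal[OF _ finite_leaves this]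
  fix k assume k: "k \<in> {1..card (leaves t)}"
  show "c ` {1..k} \<subseteq> leaves t" using greedy k by auto
  have "\<forall>i\<in>{1..card (leaves t)}. c i \<notin> c ` {1..<i}" using greedy by blast
  then show "card (c ` {1..k}) = k" using card_image_fresh k by (meson atLeastAtMost_iff)
  fix C assume C: "C \<subseteq> leaves t \<and> card C = k"
  then have "finite C" "C \<noteq> {}" using finite_subset[OF _ finite_leaves] k by auto
  then show "cost z t (c ` {1..k}) \<le> cost z t C"
    using optimal[of k C] C k lca_weight_nonneg[OF adm] by (simp add: cost)
qed

end
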